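(* Let $p=2m\ge 4$ be even, let $\Delta$ be the distance squared matrix of the cycle $C_p$, and let $\lambda$ be the largest eigenvalue of $\Delta$. Let $B$ be the $p\times p$ circulant matrix with entries $B_{ij}=2\lambda$ if $d_{ij}=m$ (i.e. $j$ is antipodal to $i$ on the cycle), $B_{ij}=-\lambda$ if $d_{ij}=m-1$, and $B_{ij}=0$ otherwise; equivalently its first row is $(\mathbf 0^T,-\lambda,2\lambda,-\lambda,\mathbf 0^T)$ with zero blocks of sizes $m-1$ and $m-2$. Then $\Delta$ is invertible and \[ \Delta^{-1}=\frac{1}{4\lambda m}\left(2J+B\right), \] where $J$ is the $p\times p$ all-ones matrix.
   Context: For a connected graph with vertices $1,\dots,n$, the distance squared matrix is the matrix with $(i,j)$ entry $d_{ij}^2$, where $d_{ij}$ is the graph distance between $i$ and $j$. The vertices of $C_p$ are labeled $1,\dots,p$ in cyclic order. *)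

theory Defs
  imports "Jordan_Normal_Form.Matrix" "Jordan_Normal_Form.Char_Poly"
begin

text \<open>Graph distance in the cycle C_p, vertices indexed 0..p-1 in cyclic order
  (vertex k+1 of the paper is index k).\<close>
definition cycle_dist :: "nat \<Rightarrow> nat \<Rightarrow> nat \<Rightarrow> nat" where
  "cycle_dist p i j = min (if i \<le> j then j - i else i - j) (p - (if i \<le> j then j - i else i - j))"

definition dist_sq_cycle :: "nat \<Rightarrow> real mat" where
  "dist_sq_cycle p = mat p p (\<lambda>(i,j). real ((cycle_dist p i j)^2))"

definition ones_mat :: "nat \<Rightarrow> real mat" where
  "ones_mat p = mat p p (\<lambda>_. 1)"

definition B_mat :: "nat \<Rightarrow> real \<Rightarrow> real mat" where
  "B_mat m l = mat (2*m) (2*m) (\<lambda>(i,j).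
     if cycle_dist (2*m) i j = m then 2*l
     else if cycle_dist (2*m) i j = m - 1 then - l else 0)"

end

theory Submission
  imports Defs
begin

text \<open>Both \<Delta> and B are circulant, so \<Delta>B is the circulant of the cyclic convolution of their
  first rows. The first row of \<Delta> is f(s) = d(s)^2, d the distance from 0 in \<int>/2m\<int>, and the first
  row of B is \<lambda> times the second-difference stencil centred at the antipode m. Hence entry s of the
  first row of \<Delta>B is -\<lambda> times the second difference of f at s - m. Since f(x) = x^2 for
  |x| \<le> m, this is -2\<lambda>, except for s = 0, where the peak of d at the antipode gives (4m - 2)\<lambda>.
  So \<Delta>B = \<lambda>(4m I - 2J), while \<Delta>J = SJ for the common row sum S of \<Delta>. Finally \<lambda> = S: the
  all-ones vector has eigenvalue S, and no eigenvalue of a nonnegative matrix exceeds its row sums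
  in absolute value.\<close>

lemma sum_mod_reindex:
  fixes n c u :: int
  assumes "u = 1 \<or> u = -1"
  shows "(\<Sum>k\<in>{0..<n}. h ((c + u * k) mod n)) = (\<Sum>r\<in>{0..<n}. h r)"
proof -
  let ?g = "\<lambda>k. (c + u * k) mod n"
  have inj: "inj_on ?g {0..<n}"
  proof (rule inj_onI)
    fix k k' assume k: "k \<in> {0..<n}" "k' \<in> {0..<n}" and "?g k = ?g k'"
    then have "n dvd u * (k - k')"
      by (metis mod_eq_dvd_iff add_diff_cancel_left right_diff_distrib)
    then have "n dvd k - k'"
      using assms by (metis dvd_minus_iff minus_diff_eq mult_minus_left mult_1)
    then have "k mod n = k' mod n" by (simp add: mod_eq_dvd_iff)
    then show "k = k'" using k by simp
  qed
  have "?g ` {0..<n} = {0..<n}"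
    by (rule endo_inj_surj) (use inj in auto)
  then show ?thesis
    using sum.reindex[OF inj, of h] by simp
qed

lemma int_mod_eq_if:
  fixes x n :: int
  assumes "- n \<le> x" "x < n"
  shows "x mod n = (if 0 \<le> x then x else x + n)"
proof (cases "0 \<le> x")
  case False
  have "x mod n = (x + n) mod n" by simp
  also have "\<dots> = x + n" using assms False by (intro mod_pos_pos_trivial) auto
  finally show ?thesis using False by simp
qed (use assms in simp)

definition circ_dist :: "int \<Rightarrow> int \<Rightarrow> int" where
  "circ_dist n x = min (x mod n) (n - x mod n)"

lemma circ_dist_mod [simp]: "circ_dist n (x mod n) = circ_dist n x"
  by (simp add: circ_dist_def)

lemma circ_dist_cong: "x mod n = y mod n \<Longrightarrow> circ_dist n x = circ_dist n y"
  by (metis circ_dist_mod)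

lemma circ_dist_abs:
  fixes m x :: int
  assumes "\<bar>x\<bar> \<le> m"
  shows "circ_dist (2 * m) x = \<bar>x\<bar>"
proof (cases "x = m")
  case False
  then have "x mod (2 * m) = (if 0 \<le> x then x else x + 2 * m)"
    using assms by (intro int_mod_eq_if) auto
  then show ?thesis using assms by (simp add: circ_dist_def)
qed (use assms in \<open>auto simp: circ_dist_def\<close>)

lemma circ_dist_sq_second_diff:
  fixes m x :: int
  assumes "m > 0"
  shows "circ_dist (2 * m) (x + 1) ^ 2 + circ_dist (2 * m) (x - 1) ^ 2
      - 2 * circ_dist (2 * m) x ^ 2 = (if x mod (2 * m) = m then 2 - 4 * m else 2)"
proof -
  define y where "y = (x + m - 1) mod (2 * m) - m + 1"
  have y: "- m < y" "y \<le> m"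
    unfolding y_def
    using assms pos_mod_sign[of "2 * m" "x + m - 1"] pos_mod_bound[of "2 * m" "x + m - 1"]
    by linarith+
  have "y mod (2 * m) = (x + m - 1 - m + 1) mod (2 * m)"
    unfolding y_def by (metis mod_add_left_eq mod_diff_left_eq)
  then have y_cong: "y mod (2 * m) = x mod (2 * m)" by simp
  then have shift: "circ_dist (2 * m) (x + d) = circ_dist (2 * m) (y + d)" for d
    by (metis circ_dist_cong mod_add_left_eq)
  have "y mod (2 * m) = (if 0 \<le> y then y else y + 2 * m)"
    using y by (intro int_mod_eq_if) auto
  then have peak_iff: "x mod (2 * m) = m \<longleftrightarrow> y = m" using y y_cong by auto
  show ?thesis
  proof (cases "y = m")
    case True
    have "circ_dist (2 * m) (x + 1) = circ_dist (2 * m) (1 - m)"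
      unfolding shift True by (rule circ_dist_cong) (simp add: mod_eq_dvd_iff)
    moreover have "circ_dist (2 * m) (x - 1) = circ_dist (2 * m) (m - 1)"
      using shift[of "-1"] True by simp
    moreover have "circ_dist (2 * m) x = circ_dist (2 * m) m"
      using shift[of 0] True by simp
    ultimately have vals: "circ_dist (2 * m) (x + 1) = m - 1" "circ_dist (2 * m) (x - 1) = m - 1"
        "circ_dist (2 * m) x = m"
      using assms by (simp_all add: circ_dist_abs)
    show ?thesis unfolding vals using True peak_iff by (simp add: power2_eq_square algebra_simps)
  next
    case False
    then have near: "circ_dist (2 * m) (x + d) = \<bar>y + d\<bar>" if "\<bar>d\<bar> \<le> 1" for d
      unfolding shift using y that by (intro circ_dist_abs) auto
    have vals: "circ_dist (2 * m) (x + 1) = \<bar>y + 1\<bar>" "circ_dist (2 * m) (x - 1) = \<bar>y - 1\<bar>"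
        "circ_dist (2 * m) x = \<bar>y\<bar>"
      using near[of 1] near[of "-1"] near[of 0] by simp_all
    show ?thesis unfolding vals using False peak_iff by (simp add: power2_eq_square algebra_simps)
  qed
qed

definition circulant :: "nat \<Rightarrow> (int \<Rightarrow> 'a) \<Rightarrow> 'a mat" where
  "circulant n c = mat n n (\<lambda>(i, j). c ((int j - int i) mod int n))"

definition cyclic_conv ::
    "nat \<Rightarrow> (int \<Rightarrow> 'a :: comm_semiring_0) \<Rightarrow> (int \<Rightarrow> 'a) \<Rightarrow> int \<Rightarrow> 'a" where
  "cyclic_conv n a b s = (\<Sum>r\<in>{0..<int n}. a ((s - r) mod int n) * b r)"

lemma sum_int_atLeast0_lessThan: "(\<Sum>k\<in>{0..<int n}. g k) = (\<Sum>k\<in>{0..<n}. g (int k))"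
  using sum.atLeast_int_lessThan_int_shift[of g 0 n] by (simp add: comp_def)

lemma circulant_carrier_mat [simp]: "circulant n c \<in> carrier_mat n n"
  by (simp add: circulant_def)

lemma dim_circulant [simp]: "dim_row (circulant n c) = n" "dim_col (circulant n c) = n"
  by (simp_all add: circulant_def)

lemma index_circulant [simp]:
  "i < n \<Longrightarrow> j < n \<Longrightarrow> circulant n c $$ (i, j) = c ((int j - int i) mod int n)"
  by (simp add: circulant_def)

lemma circulant_cong:
  assumes "\<And>s. s \<in> {0..<int n} \<Longrightarrow> c s = c' s"
  shows "circulant n c = circulant n c'"
  unfolding circulant_def using assms by (intro eq_matI) auto

lemma one_mat_circulant: "1\<^sub>m n = circulant n (\<lambda>s. if s = 0 then 1 else 0)"
proof (rule eq_matI)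
  fix i j assume "i < dim_row (circulant n (\<lambda>s. if s = 0 then 1 else 0))"
    "j < dim_col (circulant n (\<lambda>s. if s = 0 then 1 else 0))"
  then have ij: "i < n" "j < n" by (simp_all add: circulant_def)
  have "(int j - int i) mod int n = 0 \<longleftrightarrow> i = j"
    using ij by (auto simp: int_mod_eq_if)
  then show "1\<^sub>m n $$ (i, j) = circulant n (\<lambda>s. if s = 0 then 1 else 0) $$ (i, j)"
    using ij by simp
qed (simp_all add: circulant_def)

lemma circulant_mult: "circulant n a * circulant n b = circulant n (cyclic_conv n a b)"
proof (rule eq_matI)
  fix i j assume "i < dim_row (circulant n (cyclic_conv n a b))"
    "j < dim_col (circulant n (cyclic_conv n a b))"
  then have ij: "i < n" "j < n" by (simp_all add: circulant_def)
  define h where "h r = a ((int j - int i - r) mod int n) * b r" for r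
  have "(circulant n a * circulant n b) $$ (i, j)
      = (\<Sum>k\<in>{0..<n}. a ((int k - int i) mod int n) * b ((int j - int k) mod int n))"
    using ij by (auto simp: scalar_prod_def intro: sum.cong)
  also have "\<dots> = (\<Sum>k\<in>{0..<int n}. h ((int j + (-1) * k) mod int n))"
    by (simp add: sum_int_atLeast0_lessThan h_def mod_diff_right_eq)
  also have "\<dots> = (\<Sum>r\<in>{0..<int n}. h r)"
    by (rule sum_mod_reindex) simp
  also have "\<dots> = circulant n (cyclic_conv n a b) $$ (i, j)"
    using ij by (simp add: h_def cyclic_conv_def mod_diff_left_eq)
  finally show "(circulant n a * circulant n b) $$ (i, j)
      = circulant n (cyclic_conv n a b) $$ (i, j)" .
qed (simp_all add: circulant_def)

lemma circulant_row_sum: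
  assumes "i < n"
  shows "(\<Sum>k\<in>{0..<n}. circulant n c $$ (i, k)) = (\<Sum>r\<in>{0..<int n}. c r)"
proof -
  have "(\<Sum>k\<in>{0..<n}. circulant n c $$ (i, k))
      = (\<Sum>k\<in>{0..<int n}. c ((- int i + 1 * k) mod int n))"
    using assms by (simp add: sum_int_atLeast0_lessThan)
  also have "\<dots> = (\<Sum>r\<in>{0..<int n}. c r)"
    by (rule sum_mod_reindex) simp
  finally show ?thesis .
qed

lemma eigenvalue_const_row_sum:
  fixes A :: "'a :: comm_ring_1 mat"
  assumes A: "A \<in> carrier_mat n n" and "n > 0"
    and row_sum: "\<And>i. i < n \<Longrightarrow> (\<Sum>k\<in>{0..<n}. A $$ (i, k)) = s"
  shows "eigenvalue A s"
  unfolding eigenvalue_def eigenvector_def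
proof (intro exI conjI)
  let ?v = "vec n (\<lambda>_. 1 :: 'a)"
  show "?v \<in> carrier_vec (dim_row A)" using A by simp
  show "?v \<noteq> 0\<^sub>v (dim_row A)"
    using A \<open>n > 0\<close> by (metis carrier_matD(1) index_vec index_zero_vec(1) zero_neq_one)
  show "A *\<^sub>v ?v = s \<cdot>\<^sub>v ?v"
    using A row_sum by (intro eq_vecI) (auto simp: scalar_prod_def)
qed

lemma abs_eigenvalue_le_const_row_sum:
  fixes A :: "'a :: linordered_idom mat"
  assumes A: "A \<in> carrier_mat n n"
    and nonneg: "\<And>i k. i < n \<Longrightarrow> k < n \<Longrightarrow> A $$ (i, k) \<ge> 0"
    and row_sum: "\<And>i. i < n \<Longrightarrow> (\<Sum>k\<in>{0..<n}. A $$ (i, k)) = s"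
    and "eigenvalue A \<mu>"
  shows "\<bar>\<mu>\<bar> \<le> s"
proof -
  obtain v where v: "v \<in> carrier_vec n" "v \<noteq> 0\<^sub>v n" "A *\<^sub>v v = \<mu> \<cdot>\<^sub>v v"
    using \<open>eigenvalue A \<mu>\<close> A unfolding eigenvalue_def eigenvector_def by auto
  have "n > 0" using v by (metis carrier_vecD eq_vecI gr0I index_zero_vec(2) less_zeroE)
  define M where "M = Max ((\<lambda>i. \<bar>v $ i\<bar>) ` {0..<n})"
  have "M \<in> (\<lambda>i. \<bar>v $ i\<bar>) ` {0..<n}"
    unfolding M_def using \<open>n > 0\<close> by (intro Max_in) auto
  then obtain i where i: "i < n" "\<bar>v $ i\<bar> = M" by auto
  have le_M: "\<bar>v $ k\<bar> \<le> M" if "k < n" for k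
    unfolding M_def using that by (intro Max_ge) auto
  have "M > 0"
  proof (rule ccontr)
    assume "\<not> M > 0"
    then have "v $ k = 0" if "k < n" for k
      using le_M[OF that] by (metis abs_le_zero_iff not_less order_trans)
    then have "v = 0\<^sub>v n" using v(1) by (intro eq_vecI) auto
    with v(2) show False ..
  qed
  have "\<mu> * v $ i = (A *\<^sub>v v) $ i" using v i by simp
  also have "\<dots> = (\<Sum>k\<in>{0..<n}. A $$ (i, k) * v $ k)"
    using A v(1) i by (simp add: scalar_prod_def)
  finally have "\<bar>\<mu>\<bar> * M = \<bar>\<Sum>k\<in>{0..<n}. A $$ (i, k) * v $ k\<bar>" by (metis abs_mult i(2))
  also have "\<dots> \<le> (\<Sum>k\<in>{0..<n}. A $$ (i, k) * M)"
    using nonneg i le_M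
    by (intro order_trans[OF sum_abs] sum_mono) (auto simp: abs_mult intro: mult_left_mono)
  also have "\<dots> = s * M" by (metis row_sum[OF i(1)] sum_distrib_right)
  finally show ?thesis using \<open>M > 0\<close> by (rule mult_right_le_imp_le)
qed

lemma max_eigenvalue_eq_const_row_sum:
  fixes A :: "'a :: linordered_idom mat"
  assumes A: "A \<in> carrier_mat n n" and "n > 0"
    and nonneg: "\<And>i k. i < n \<Longrightarrow> k < n \<Longrightarrow> A $$ (i, k) \<ge> 0"
    and row_sum: "\<And>i. i < n \<Longrightarrow> (\<Sum>k\<in>{0..<n}. A $$ (i, k)) = s"
    and "eigenvalue A l" and max: "\<And>\<mu>. eigenvalue A \<mu> \<Longrightarrow> \<mu> \<le> l"
  shows "l = s"
proof -
  have "s \<le> l" using eigenvalue_const_row_sum[OF A \<open>n > 0\<close> row_sum] max by blast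
  moreover have "\<bar>l\<bar> \<le> s"
    using abs_eigenvalue_le_const_row_sum[OF A nonneg row_sum \<open>eigenvalue A l\<close>] .
  ultimately show ?thesis by simp
qed

lemma max_eigenvalue_nonneg_circulant:
  fixes c :: "int \<Rightarrow> 'a :: linordered_idom"
  assumes "n > 0" and "\<And>s. c s \<ge> 0"
    and "eigenvalue (circulant n c) l" and "\<And>\<mu>. eigenvalue (circulant n c) \<mu> \<Longrightarrow> \<mu> \<le> l"
  shows "l = (\<Sum>r\<in>{0..<int n}. c r)"
  by (rule max_eigenvalue_eq_const_row_sum
      [OF circulant_carrier_mat assms(1) _ circulant_row_sum assms(3,4)])
    (simp add: assms(2))

lemma cycle_dist_eq_circ_dist:
  assumes "i < p" "j < p"
  shows "int (cycle_dist p i j) = circ_dist (int p) (int j - int i)"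
proof (cases "i \<le> j")
  case True
  then have "(int j - int i) mod int p = int j - int i" using assms by simp
  then show ?thesis
    using True assms by (auto simp: cycle_dist_def circ_dist_def min_def of_nat_diff)
next
  case False
  then have "(int j - int i) mod int p = int p - (int i - int j)"
    using assms by (simp add: int_mod_eq_if)
  then show ?thesis using False assms by (auto simp: cycle_dist_def circ_dist_def of_nat_diff)
qed

definition dist_sq_row :: "nat \<Rightarrow> int \<Rightarrow> real" where
  "dist_sq_row p s = of_int (circ_dist (int p) s ^ 2)"

lemma dist_sq_row_nonneg: "dist_sq_row p s \<ge> 0"
  by (simp add: dist_sq_row_def)

lemma dist_sq_cycle_circulant: "dist_sq_cycle p = circulant p (dist_sq_row p)"
proof (rule eq_matI)
  fix i j
  assume "i < dim_row (circulant p (dist_sq_row p))" "j < dim_col (circulant p (dist_sq_row p))"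
  then have ij: "i < p" "j < p" by simp_all
  have "real (cycle_dist p i j ^ 2) = of_int (int (cycle_dist p i j) ^ 2)" by simp
  then show "dist_sq_cycle p $$ (i, j) = circulant p (dist_sq_row p) $$ (i, j)"
    using ij by (simp add: dist_sq_cycle_def dist_sq_row_def cycle_dist_eq_circ_dist)
qed (simp_all add: dist_sq_cycle_def)

lemma sum_dist_sq_row_pos:
  assumes "p \<ge> 2"
  shows "(\<Sum>r\<in>{0..<int p}. dist_sq_row p r) > 0"
proof (rule sum_pos2)
  show "dist_sq_row p 1 > 0" using assms by (simp add: dist_sq_row_def circ_dist_def)
qed (use assms dist_sq_row_nonneg in auto)

definition antipodal_row :: "nat \<Rightarrow> int \<Rightarrow> real" where
  "antipodal_row m s = (if s = int m then 2 else if s = int m - 1 \<or> s = int m + 1 then -1 else 0)"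

lemma B_mat_circulant:
  assumes "m \<ge> 2"
  shows "B_mat m l = circulant (2 * m) (\<lambda>s. l * antipodal_row m s)"
proof (rule eq_matI)
  fix i j assume "i < dim_row (circulant (2 * m) (\<lambda>s. l * antipodal_row m s))"
    "j < dim_col (circulant (2 * m) (\<lambda>s. l * antipodal_row m s))"
  then have ij: "i < 2 * m" "j < 2 * m" by simp_all
  define r where "r = (int j - int i) mod int (2 * m)"
  have r: "0 \<le> r" "r < 2 * int m" using ij by (auto simp: r_def)
  have "int (cycle_dist (2 * m) i j) = min r (2 * int m - r)"
    using cycle_dist_eq_circ_dist[OF ij] r by (simp add: r_def circ_dist_def)
  then have "cycle_dist (2 * m) i j = m \<longleftrightarrow> r = int m"
    "cycle_dist (2 * m) i j = m - 1 \<longleftrightarrow> r = int m - 1 \<or> r = int m + 1"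
    using r assms by linarith+
  moreover have "B_mat m l $$ (i, j) = (if cycle_dist (2 * m) i j = m then 2 * l
      else if cycle_dist (2 * m) i j = m - 1 then - l else 0)"
    using ij by (simp add: B_mat_def)
  moreover have "circulant (2 * m) (\<lambda>s. l * antipodal_row m s) $$ (i, j) = l * antipodal_row m r"
    using ij by (simp add: r_def)
  ultimately show "B_mat m l $$ (i, j) = circulant (2 * m) (\<lambda>s. l * antipodal_row m s) $$ (i, j)"
    by (simp only:) (simp add: antipodal_row_def)
qed (simp_all add: B_mat_def)

lemma sum_antipodal_row:
  assumes "m \<ge> 2"
  shows "(\<Sum>r\<in>{0..<int (2 * m)}. g r * antipodal_row m r)
    = 2 * g (int m) - g (int m - 1) - g (int m + 1)"
proof -
  have "(\<Sum>r\<in>{0..<int (2 * m)}. g r * antipodal_row m r)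
      = (\<Sum>r\<in>{int m - 1, int m, int m + 1}. g r * antipodal_row m r)"
    by (rule sum.mono_neutral_right) (use assms in \<open>auto simp: antipodal_row_def\<close>)
  also have "\<dots> = 2 * g (int m) - g (int m - 1) - g (int m + 1)"
    by (simp add: antipodal_row_def)
  finally show ?thesis .
qed

lemma cyclic_conv_dist_sq_row_antipodal_row:
  assumes "m \<ge> 2"
  shows "cyclic_conv (2 * m) (dist_sq_row (2 * m)) (antipodal_row m) s
    = (if s mod int (2 * m) = 0 then 4 * real m - 2 else -2)"
proof -
  let ?d = "\<lambda>x. circ_dist (2 * int m) x"
  have "cyclic_conv (2 * m) (dist_sq_row (2 * m)) (antipodal_row m) s
      = - of_int (?d (s - m + 1) ^ 2 + ?d (s - m - 1) ^ 2 - 2 * ?d (s - m) ^ 2)"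
    unfolding cyclic_conv_def
    by (subst sum_antipodal_row[OF assms]) (simp add: dist_sq_row_def algebra_simps)
  also have "\<dots> = (if (s - m) mod (2 * int m) = m then 4 * real m - 2 else -2)"
    using circ_dist_sq_second_diff[of "int m" "s - m"] assms by simp
  also have "(s - m) mod (2 * int m) = m \<longleftrightarrow> s mod int (2 * m) = 0"
  proof -
    have "(s - m) mod (2 * int m) = m \<longleftrightarrow> (s - m) mod (2 * int m) = int m mod (2 * int m)"
      using assms by simp
    also have "\<dots> \<longleftrightarrow> 2 * int m dvd s - m - m" by (rule mod_eq_dvd_iff)
    also have "\<dots> \<longleftrightarrow> 2 * int m dvd s"
      using dvd_add_triv_right_iff[of "2 * int m" "s - m - m"] by simp
    finally show ?thesis by (simp add: mod_eq_0_iff_dvd)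
  qed
  finally show ?thesis .
qed

lemma cyclic_conv_dist_sq_row_inverse:
  assumes "m \<ge> 2" and l: "l = (\<Sum>r\<in>{0..<int (2 * m)}. dist_sq_row (2 * m) r)"
  shows "cyclic_conv (2 * m) (dist_sq_row (2 * m))
      (\<lambda>r. (2 + l * antipodal_row m r) / (4 * l * m)) s = (if s mod int (2 * m) = 0 then 1 else 0)"
proof -
  let ?f = "dist_sq_row (2 * m)"
  have "l > 0" using sum_dist_sq_row_pos[of "2 * m"] assms by simp
  have "(\<Sum>r\<in>{0..<int (2 * m)}. ?f ((s + (-1) * r) mod int (2 * m))) = l"
    unfolding l by (rule sum_mod_reindex) simp
  moreover have "(\<Sum>r\<in>R. g r * ((2 + l * b r) / c))
      = (2 * (\<Sum>r\<in>R. g r) + l * (\<Sum>r\<in>R. g r * b r)) / c"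
    for g b :: "int \<Rightarrow> real" and R and c
    by (simp add: sum_divide_distrib sum.distrib sum_distrib_left sum_distrib_right
        add_divide_distrib algebra_simps)
  ultimately have "cyclic_conv (2 * m) ?f (\<lambda>r. (2 + l * antipodal_row m r) / (4 * l * m)) s
      = (2 * l + l * cyclic_conv (2 * m) ?f (antipodal_row m) s) / (4 * l * m)"
    unfolding cyclic_conv_def by simp
  also have "\<dots> = (if s mod int (2 * m) = 0 then 1 else 0)"
    unfolding cyclic_conv_dist_sq_row_antipodal_row[OF assms(1)]
    using \<open>l > 0\<close> assms(1) by (simp add: field_simps)
  finally show ?thesis .
qed

theorem lemma6p1:
  fixes m :: nat and l :: real
  assumes "m \<ge> 2"
    and "eigenvalue (dist_sq_cycle (2*m)) l"
    and "\<forall>\<mu>. eigenvalue (dist_sq_cycle (2*m)) \<mu> \<longrightarrow> \<mu> \<le> l"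
  shows "invertible_mat (dist_sq_cycle (2*m)) \<and>
    (let X = (1 / (4 * l * real m)) \<cdot>\<^sub>m (2 \<cdot>\<^sub>m ones_mat (2*m) + B_mat m l)
     in dist_sq_cycle (2*m) * X = 1\<^sub>m (2*m) \<and> X * dist_sq_cycle (2*m) = 1\<^sub>m (2*m))"
proof -
  let ?D = "dist_sq_cycle (2 * m)"
  define X where "X = (1 / (4 * l * real m)) \<cdot>\<^sub>m (2 \<cdot>\<^sub>m ones_mat (2 * m) + B_mat m l)"
  have D: "?D = circulant (2 * m) (dist_sq_row (2 * m))" by (rule dist_sq_cycle_circulant)
  have l: "l = (\<Sum>r\<in>{0..<int (2 * m)}. dist_sq_row (2 * m) r)"
    using assms unfolding D
    by (intro max_eigenvalue_nonneg_circulant) (auto simp: dist_sq_row_nonneg)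
  have X: "X = circulant (2 * m) (\<lambda>r. (2 + l * antipodal_row m r) / (4 * l * m))"
    unfolding X_def B_mat_circulant[OF assms(1)]
    by (rule eq_matI) (simp_all add: ones_mat_def)
  have DX: "?D * X = 1\<^sub>m (2 * m)"
    unfolding D X circulant_mult one_mat_circulant
  proof (rule circulant_cong)
    fix s assume "s \<in> {0..<int (2 * m)}"
    then show "cyclic_conv (2 * m) (dist_sq_row (2 * m))
        (\<lambda>r. (2 + l * antipodal_row m r) / (4 * l * m)) s = (if s = 0 then 1 else 0)"
      using cyclic_conv_dist_sq_row_inverse[OF assms(1) l, of s] by simp
  qed
  moreover have XD: "X * ?D = 1\<^sub>m (2 * m)"
    using mat_mult_left_right_inverse[OF _ _ DX] D X by simp
  ultimately have "invertible_mat ?D"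
    unfolding invertible_mat_def inverts_mat_def using D X by auto
  then show ?thesis using DX XD unfolding X_def Let_def by simp
qed

end
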